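(* Let $\rho:\mathbb{R}\to\mathbb{R}$ be differentiable, applied element-wise to vectors, and let $\vec{W}\in\mathbb{R}^{N\times N}$, $\vec{b}\in\mathbb{R}^N$, $\vec{U}\in\mathbb{R}^{N\times d}$. If the CHN with these data is well-behaved, then $\rho'(0)\neq 0$.
   Context: A CHN (continuous Hopfield network) with element-wise non-linearity $\rho$ and parameters $\vec{W},\vec{b},\vec{U}$ assigns to an input $\vec{x}\in\mathbb{R}^d$ its equilibrium state(s), the solutions $\vec{s}^*\in\mathbb{R}^N$ of $\vec{s}^*=\rho'(\vec{s}^* )\odot(\vec{W}\rho(\vec{s}^* )+\vec{b}+\vec{U}\rho(\vec{x}))$, where $\odot$ is the Hadamard product. The CHN is called well-behaved if for every input $\vec{x}$ this equation has exactly one solution $\vec{s}^*$ and this solution is not identically zero. *)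

theory Defs
  imports "HOL-Analysis.Analysis"
begin

definition vmap :: "(real \<Rightarrow> real) \<Rightarrow> real^'n \<Rightarrow> real^'n" where
  "vmap f v = (\<chi> i. f (v $ i))"

definition chn_equilibrium ::
  "(real \<Rightarrow> real) \<Rightarrow> real^'n^'n \<Rightarrow> real^'n \<Rightarrow> real^'d^'n \<Rightarrow> real^'d \<Rightarrow> real^'n \<Rightarrow> bool" where
  "chn_equilibrium rho W b U x s \<longleftrightarrow>
     s = (\<chi> i. deriv rho (s $ i) * ((W *v vmap rho s + b + U *v vmap rho x) $ i))"

definition chn_well_behaved ::
  "(real \<Rightarrow> real) \<Rightarrow> real^'n^'n \<Rightarrow> real^'n \<Rightarrow> real^'d^'n \<Rightarrow> bool" where
  "chn_well_behaved rho W b U \<longleftrightarrow>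
     (\<forall>x. (\<exists>!s. chn_equilibrium rho W b U x s) \<and>
          (\<forall>s. chn_equilibrium rho W b U x s \<longrightarrow> s \<noteq> 0))"

end

theory Submission
  imports Defs
begin

lemma chn_equilibrium_zero_if_deriv_zero:
  assumes "deriv rho 0 = 0"
  shows "chn_equilibrium rho W b U x 0"
  unfolding chn_equilibrium_def using assms by (simp add: vec_eq_iff)

lemma chn_well_behaved_imp_zero_not_equilibrium:
  assumes "chn_well_behaved rho W b U"
  shows "\<not> chn_equilibrium rho W b U x 0"
  using assms unfolding chn_well_behaved_def by blast

theorem lemma1:
  fixes rho :: "real \<Rightarrow> real"
    and W :: "real^'n^'n" and b :: "real^'n" and U :: "real^'d^'n"
  assumes "\<And>t. rho differentiable at t"
    and "chn_well_behaved rho W b U"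
  shows "deriv rho 0 \<noteq> 0"
  using chn_equilibrium_zero_if_deriv_zero
    chn_well_behaved_imp_zero_not_equilibrium[OF assms(2)] by blast

end
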